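(* Let $n\ge 3$ and let $A_1A_2\dots A_n$ be a polygon in the Euclidean plane, with indices of vertices taken modulo $n$ (so $A_{n+1}=A_1$, etc.). Let $s,t$ be positive integers with $2s+t=n$, and let $M$ be a point of the plane distinct from all vertices $A_1,\dots,A_n$. Suppose that for every $i\in\{1,\dots,n\}$ and every $j\in\{i+s,i+s+1,\dots,i+s+t-1\}$ (indices mod $n$) the line $A_iM$ meets the line $A_jA_{j+1}$ in a single point $M_{ij}$, and that $M_{ij}\notin\{A_j,A_{j+1}\}$. Then $$\prod_{i=1}^{n}\ \prod_{j=i+s}^{i+s+t-1}\frac{\overline{M_{ij}A_j}}{\overline{M_{ij}A_{j+1}}}=(-1)^n .$$
   Context: For three collinear points $X,Y,Z$ with $X\neq Z$, $\frac{\overline{XY}}{\overline{XZ}}$ denotes the ratio of signed (directed) lengths along their common line: it equals $|XY|/|XZ|$ if $Y$ and $Z$ lie on the same side of $X$ on that line, and $-|XY|/|XZ|$ otherwise. *)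

theory Defs
  imports "HOL-Analysis.Analysis"
begin

text \<open>Signed ratio XY/XZ of collinear points X, Y, Z (X \<noteq> Z): positive iff Y and Z
  lie on the same side of X on their common line (Y = X gives 0).\<close>
definition signed_ratio :: "real^2 \<Rightarrow> real^2 \<Rightarrow> real^2 \<Rightarrow> real" where
  "signed_ratio X Y Z =
     (if (\<exists>c::real. c \<ge> 0 \<and> Y - X = c *\<^sub>R (Z - X))
      then dist X Y / dist X Z
      else - (dist X Y / dist X Z))"

end

theory Submission
  imports Defs
begin

text \<open>Write \<open>[u, v]\<close> for the determinant \<open>cross2 u v\<close> of two plane vectors. For the line through \<open>M\<close>
  and \<open>A\<^sub>i\<close>, the signed ratio in which it divides the side \<open>A\<^sub>jA\<^sub>j\<^sub>+\<^sub>1\<close> is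
  \<open>[A\<^sub>j - M, A\<^sub>i - M] / [A\<^sub>j\<^sub>+\<^sub>1 - M, A\<^sub>i - M]\<close>, since the distances of \<open>A\<^sub>j\<close>
  and \<open>A\<^sub>j\<^sub>+\<^sub>1\<close> from that line are proportional to these determinants. Hence the
  inner product telescopes to \<open>D(i+s, i) / D(i+s+t, i)\<close> with \<open>D(k, i) = [A\<^sub>k - M, A\<^sub>i - M]\<close>.
  As \<open>i + s + t \<equiv> i - s (mod n)\<close>, shifting the index turns the product of the denominators
  into \<open>\<Prod>\<^sub>i D(i, i+s)\<close>, which by antisymmetry of \<open>D\<close> is \<open>(-1)\<^sup>n\<close> times the
  product of the numerators.\<close>

definition cross2 :: "real^2 \<Rightarrow> real^2 \<Rightarrow> real" where
  "cross2 u v = u$1 * v$2 - u$2 * v$1"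

lemma parallel_if_cross2_eq_0:
  fixes x w :: "real^2"
  assumes "w \<noteq> 0" "cross2 x w = 0"
  shows "\<exists>c. x = c *\<^sub>R w"
proof (cases "w$1 = 0")
  case True
  then have "w$2 \<noteq> 0"
    using assms(1) by (metis exhaust_2 vec_eq_iff zero_index)
  then have "x = (x$2 / w$2) *\<^sub>R w"
    using True assms(2) by (simp add: cross2_def vec_eq_iff forall_2)
  then show ?thesis by blast
next
  case False
  then have "x = (x$1 / w$1) *\<^sub>R w"
    using assms(2) by (simp add: cross2_def vec_eq_iff forall_2 field_simps)
  then show ?thesis by blast
qed

lemma mem_affine_hull_if_cross2_eq_0:
  fixes a m x :: "real^2"
  assumes "m \<noteq> a" "cross2 (x - m) (a - m) = 0"
  shows "x \<in> affine hull {a, m}"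
proof -
  obtain c where "x - m = c *\<^sub>R (a - m)"
    using parallel_if_cross2_eq_0[of "a - m" "x - m"] assms by auto
  then have "x = c *\<^sub>R a + (1 - c) *\<^sub>R m" by (simp add: algebra_simps)
  then show ?thesis unfolding affine_hull_2 by force
qed

lemma cross2_ne_0_if_line_meets:
  fixes a m p b b' :: "real^2"
  assumes "m \<noteq> a" "affine hull {a, m} \<inter> affine hull {b, b'} = {p}" "p \<noteq> b" "p \<noteq> b'"
  shows "cross2 (b - m) (a - m) \<noteq> 0" "cross2 (b' - m) (a - m) \<noteq> 0"
proof -
  have "cross2 (x - m) (a - m) \<noteq> 0" if "x \<in> {b, b'}" for x
  proof
    assume "cross2 (x - m) (a - m) = 0"
    then have "x \<in> affine hull {a, m} \<inter> affine hull {b, b'}"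
      using mem_affine_hull_if_cross2_eq_0 \<open>m \<noteq> a\<close> that by (simp add: hull_inc)
    then show False using assms(2-4) that by auto
  qed
  then show "cross2 (b - m) (a - m) \<noteq> 0" "cross2 (b' - m) (a - m) \<noteq> 0" by simp_all
qed

lemma signed_ratio_eq_if_scaled:
  assumes "X \<noteq> Z" "Y - X = r *\<^sub>R (Z - X)"
  shows "signed_ratio X Y Z = r"
proof -
  have dist: "dist X Y = \<bar>r\<bar> * dist X Z"
    by (simp add: dist_norm norm_minus_commute[of X] assms(2))
  show ?thesis
  proof (cases "\<exists>c::real. c \<ge> 0 \<and> Y - X = c *\<^sub>R (Z - X)")
    case True
    then obtain c where "c \<ge> 0" "Y - X = c *\<^sub>R (Z - X)" by blast
    with assms have "c = r"
      by (metis eq_iff_diff_eq_0 scaleR_cancel_right)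
    then show ?thesis using True \<open>c \<ge> 0\<close> dist assms(1) unfolding signed_ratio_def by simp
  next
    case False
    then have "r < 0" using assms(2) by (metis not_le)
    then show ?thesis using False dist assms(1) unfolding signed_ratio_def by simp
  qed
qed

lemma signed_ratio_line_intersection:
  fixes a m p b b' :: "real^2"
  assumes "m \<noteq> a" and meet: "affine hull {a, m} \<inter> affine hull {b, b'} = {p}"
    and "p \<noteq> b" "p \<noteq> b'"
  shows "signed_ratio p b b' = cross2 (b - m) (a - m) / cross2 (b' - m) (a - m)"
proof -
  have "p \<in> affine hull {a, m}" "p \<in> affine hull {b, b'}" using meet by auto
  then obtain u v c' c where p: "p = u *\<^sub>R a + v *\<^sub>R m" "p = c' *\<^sub>R b + c *\<^sub>R b'"
    and "u + v = 1" "c' + c = 1"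
    unfolding affine_hull_2 by blast
  then have "v = 1 - u" "c' = 1 - c" by simp_all
  have "p - m = u *\<^sub>R (a - m)"
    using p(1) \<open>v = 1 - u\<close> by (simp add: algebra_simps)
  then have "cross2 (p - m) (a - m) = 0"
    by (simp only:) (simp add: cross2_def algebra_simps)
  then have cross2_shift: "cross2 (x - m) (a - m) = cross2 (x - p) (a - m)" for x
    by (simp add: cross2_def algebra_simps)
  have "1 - c \<noteq> 0" using p(2) \<open>c' = 1 - c\<close> \<open>p \<noteq> b'\<close> by auto
  define r where "r = - c / (1 - c)"
  have "r * (1 - c) = - c" using \<open>1 - c \<noteq> 0\<close> by (simp add: r_def)
  have "b - p = (- c) *\<^sub>R (b' - b)"
    using p(2) \<open>c' = 1 - c\<close> by (simp add: algebra_simps)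
  also have "\<dots> = r *\<^sub>R ((1 - c) *\<^sub>R (b' - b))"
    using \<open>r * (1 - c) = - c\<close> by simp
  also have "(1 - c) *\<^sub>R (b' - b) = b' - p"
    using p(2) \<open>c' = 1 - c\<close> by (simp add: algebra_simps)
  finally have scaled: "b - p = r *\<^sub>R (b' - p)" .
  have "cross2 (b - m) (a - m) = r * cross2 (b' - m) (a - m)"
    unfolding cross2_shift scaled by (simp add: cross2_def algebra_simps)
  moreover have "cross2 (b' - m) (a - m) \<noteq> 0"
    using cross2_ne_0_if_line_meets(2) assms .
  ultimately show ?thesis
    using signed_ratio_eq_if_scaled[OF _ scaled] \<open>p \<noteq> b'\<close> by simp
qed

lemma prod_signed_ratio_telescope:
  fixes a m :: "real^2" and B Q :: "nat \<Rightarrow> real^2"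
  assumes "m \<noteq> a" "0 < t"
    and meet: "\<And>j. j \<in> {k..<k+t} \<Longrightarrow>
      affine hull {a, m} \<inter> affine hull {B j, B (j+1)} = {Q j} \<and> Q j \<noteq> B j \<and> Q j \<noteq> B (j+1)"
  shows "(\<Prod>j\<in>{k..<k+t}. signed_ratio (Q j) (B j) (B (j+1)))
           = cross2 (B k - m) (a - m) / cross2 (B (k+t) - m) (a - m)"
proof -
  define f where "f j = cross2 (B (k+j) - m) (a - m)" for j
  have "f j \<noteq> 0" if "j \<le> t" for j
  proof (cases "j < t")
    case True
    then have "k + j \<in> {k..<k+t}" by simp
    then show ?thesis
      unfolding f_def using cross2_ne_0_if_line_meets(1)[OF \<open>m \<noteq> a\<close>] meet by blast
  next
    case False
    with that \<open>0 < t\<close> have "k + t - 1 \<in> {k..<k+t}" "k + t - 1 + 1 = k + j" by auto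
    then show ?thesis
      unfolding f_def using cross2_ne_0_if_line_meets(2)[OF \<open>m \<noteq> a\<close>] meet by metis
  qed
  have "(\<Prod>j\<in>{k..<k+t}. signed_ratio (Q j) (B j) (B (j+1)))
      = (\<Prod>j\<in>{k..<k+t}. cross2 (B j - m) (a - m) / cross2 (B (j+1) - m) (a - m))"
  proof (rule prod.cong [OF refl])
    show "signed_ratio (Q j) (B j) (B (j+1)) = cross2 (B j - m) (a - m) / cross2 (B (j+1) - m) (a - m)"
      if "j \<in> {k..<k+t}" for j
      using signed_ratio_line_intersection[OF \<open>m \<noteq> a\<close>] meet[OF that] by blast
  qed
  also have "\<dots> = (\<Prod>j<t. f j / f (Suc j))"
    by (simp add: prod.atLeastLessThan_shift_0 atLeast0LessThan f_def)
  also have "\<dots> = f 0 / f t"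
    using \<open>\<And>j. j \<le> t \<Longrightarrow> f j \<noteq> 0\<close> by (rule prod_lessThan_telescope')
  finally show ?thesis by (simp add: f_def)
qed

lemma prod_periodic_shift:
  fixes h :: "nat \<Rightarrow> 'a::comm_monoid_mult"
  assumes periodic: "\<And>k. h (k + n) = h k"
  shows "(\<Prod>i=1..n. h (i + s)) = (\<Prod>i=1..n. h i)"
proof (cases "n = 0")
  case False
  show ?thesis
  proof (induction s)
    case (Suc s)
    have "(\<Prod>i=1..n. h (i + Suc s)) = (\<Prod>i=2..Suc n. h (i + s))"
      using prod.shift_bounds_cl_Suc_ivl[of "\<lambda>i. h (i + s)" 1 n] by (simp add: numeral_2_eq_2)
    also have "\<dots> = (\<Prod>i=2..n. h (i + s)) * h (1 + s)"
      using periodic[of "1 + s"] \<open>n \<noteq> 0\<close> by (simp add: ac_simps)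
    also have "\<dots> = (\<Prod>i=1..n. h (i + s))"
      using \<open>n \<noteq> 0\<close> by (simp add: prod.atLeast_Suc_atMost numeral_2_eq_2 mult.commute)
    finally show ?case using Suc.IH by simp
  qed simp
qed simp

lemma prod_ratio_periodic_antisymmetric:
  fixes D :: "nat \<Rightarrow> nat \<Rightarrow> 'a::field"
  assumes periodic: "\<And>k i. D (k + n) i = D k i" "\<And>k i. D k (i + n) = D k i"
    and antisymmetric: "\<And>k i. D k i = - D i k"
    and nonzero: "\<And>i. i \<in> {1..n} \<Longrightarrow> D (i + s) i \<noteq> 0"
    and "2 * s + t = n"
  shows "(\<Prod>i=1..n. D (i + s) i / D (i + s + t) i) = (-1) ^ n"
proof -
  define X where "X = (\<Prod>i=1..n. D (i + s) i)"
  have "D (k + n + s + t) (k + n) = D (k + s + t) k" for k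
  proof -
    have "D (k + n + s + t) (k + n) = D ((k + s + t) + n) (k + n)" by (simp add: ac_simps)
    then show ?thesis by (simp only: periodic)
  qed
  then have "(\<Prod>i=1..n. D (i + s + t) i) = (\<Prod>i=1..n. D (i + s + s + t) (i + s))"
    using prod_periodic_shift[of "\<lambda>i. D (i + s + t) i" n s] by simp
  also have "\<dots> = (\<Prod>i=1..n. D i (i + s))"
  proof (rule prod.cong [OF refl])
    fix i
    have "i + s + s + t = i + n" using \<open>2 * s + t = n\<close> by simp
    then show "D (i + s + s + t) (i + s) = D i (i + s)" by (simp only: periodic)
  qed
  also have "\<dots> = (\<Prod>i=1..n. (-1) * D (i + s) i)"
  proof (rule prod.cong [OF refl])
    show "D i (i + s) = (-1) * D (i + s) i" for i
      using antisymmetric[of i "i + s"] by simp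
  qed
  also have "\<dots> = (-1) ^ n * X"
    by (simp only: X_def prod.distrib prod_constant card_atLeastAtMost) simp
  finally have "(\<Prod>i=1..n. D (i + s) i / D (i + s + t) i) = X / ((-1) ^ n * X)"
    by (simp add: X_def prod_dividef)
  moreover have "X \<noteq> 0" using nonzero by (simp add: X_def)
  ultimately show ?thesis by (cases "even n") auto
qed

theorem theorem1:
  fixes n s t :: nat
    and A :: "nat \<Rightarrow> real^2"
    and M :: "real^2"
    and P :: "nat \<Rightarrow> nat \<Rightarrow> real^2"
  assumes "n \<ge> 3"
    and "s > 0" and "t > 0" and "2 * s + t = n"
    and periodic: "\<forall>k. A (k + n) = A k"
    and "\<forall>i\<in>{1..n}. M \<noteq> A i"
    and inter: "\<forall>i\<in>{1..n}. \<forall>j\<in>{i+s..i+s+t-1}.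
          affine hull {A i, M} \<inter> affine hull {A j, A (j+1)} = {P i j}
          \<and> P i j \<noteq> A j \<and> P i j \<noteq> A (j+1)"
  shows "(\<Prod>i\<in>{1..n}. \<Prod>j\<in>{i+s..i+s+t-1}. signed_ratio (P i j) (A j) (A (j+1)))
           = (-1::real) ^ n"
proof -
  define D where "D k i = cross2 (A k - M) (A i - M)" for k i
  have ivl: "{i+s..i+s+t-1} = {i+s..<i+s+t}" for i
    using \<open>t > 0\<close> by auto
  have "(\<Prod>j\<in>{i+s..i+s+t-1}. signed_ratio (P i j) (A j) (A (j+1))) = D (i+s) i / D (i+s+t) i"
    if "i \<in> {1..n}" for i
    unfolding ivl D_def
  proof (rule prod_signed_ratio_telescope)
    show "M \<noteq> A i" using assms(6) that by blast
    show "affine hull {A i, M} \<inter> affine hull {A j, A (j + 1)} = {P i j} \<and> P i j \<noteq> A j \<and> P i j \<noteq> A (j + 1)"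
      if "j \<in> {i + s..<i + s + t}" for j
      using inter \<open>i \<in> {1..n}\<close> that unfolding ivl by blast
  qed (rule \<open>t > 0\<close>)
  then have "(\<Prod>i\<in>{1..n}. \<Prod>j\<in>{i+s..i+s+t-1}. signed_ratio (P i j) (A j) (A (j+1)))
      = (\<Prod>i=1..n. D (i+s) i / D (i+s+t) i)"
    by (rule prod.cong [OF refl])
  also have "\<dots> = (-1) ^ n"
  proof (rule prod_ratio_periodic_antisymmetric)
    show "D (k + n) i = D k i" "D i (k + n) = D i k" for k i
      using periodic by (simp_all add: D_def)
    show "D k i = - D i k" for k i
      by (simp add: D_def cross2_def)
    show "D (i + s) i \<noteq> 0" if "i \<in> {1..n}" for i
    proof -
      have "i + s \<in> {i+s..i+s+t-1}" using \<open>t > 0\<close> by simp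
      then show ?thesis
        using inter that assms(6) cross2_ne_0_if_line_meets[of M "A i" "A (i+s)" "A (i+s+1)" "P i (i+s)"]
        unfolding D_def by blast
    qed
  qed (rule \<open>2 * s + t = n\<close>)
  finally show ?thesis .
qed

end
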